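(* Let $\alpha,\beta:[0,1]\to X$ be paths from $x_0$ to $x_1$ and let $A$ be a homotopy cut-set for $\alpha$ and $\beta$. (1) If $x_0\notin\mathbf{aw}(X)$, there is a homotopy cut-set $B\subseteq A$ for $\alpha,\beta$ in which $0$ is an isolated point. (2) If $x_1\notin\mathbf{aw}(X)$, there is a homotopy cut-set $B\subseteq A$ for $\alpha,\beta$ in which $1$ is an isolated point. (3) If $x_0,x_1\notin\mathbf{aw}(X)$, there is a homotopy cut-set $B\subseteq A$ for $\alpha,\beta$ in which both $0$ and $1$ are isolated points.
   Context: $\simeq$ is path-homotopy. A loop is trivial if path-homotopic to a constant loop. A sequence of loops $\alpha_n$ based at $x$ is a null-sequence if every neighborhood of $x$ contains $\alpha_n([0,1])$ for all but finitely many $n$. $\mathbf{aw}(X)=\{x\in X\mid \text{there is a null-sequence of non-trivial loops based at }x\}$. For paths $\alpha,\beta:[s,t]\to X$, a set $A\subseteq[s,t]$ is a homotopy cut-set for $\alpha,\beta$ if $A$ is closed, nowhere dense, contains $\{s,t\}$, $\alpha|_A=\beta|_A$, and $\alpha|_{[a,b]}\simeq\beta|_{[a,b]}$ for every component $(a,b)$ of $[s,t]\setminus A$. *)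

theory Defs
  imports "HOL-Analysis.Analysis"
begin

text \<open>The space X is modelled as a subset S of a topological space type, with the
subspace topology (S = UNIV gives an arbitrary topological space).\<close>

definition trivial_loop :: "'a::topological_space set \<Rightarrow> (real \<Rightarrow> 'a) \<Rightarrow> bool" where
  "trivial_loop S p \<longleftrightarrow> homotopic_paths S p (\<lambda>t. pathstart p)"

definition null_sequence :: "(nat \<Rightarrow> real \<Rightarrow> 'a::topological_space) \<Rightarrow> 'a \<Rightarrow> bool" where
  "null_sequence \<alpha> x \<longleftrightarrow>
     (\<forall>U. open U \<and> x \<in> U \<longrightarrow> (\<forall>\<^sub>F n in sequentially. path_image (\<alpha> n) \<subseteq> U))"

definition aw :: "'a::topological_space set \<Rightarrow> 'a set" where
  "aw S = {x \<in> S. \<exists>\<alpha>. (\<forall>n. path (\<alpha> n) \<and> path_image (\<alpha> n) \<subseteq> S \<and>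
                         pathstart (\<alpha> n) = x \<and> pathfinish (\<alpha> n) = x \<and>
                         \<not> trivial_loop S (\<alpha> n))
                   \<and> null_sequence \<alpha> x}"

text \<open>Since 0,1 are in A, the components of [0,1] - A
are open intervals {a<..<b}; restriction of a path to [a,b] is reparametrised linearly to [0,1].
Nowhere density of a closed subset of [0,1] is expressed as empty interior
(equivalent to empty interior relative to [0,1]).\<close>

definition homotopy_cut_set ::
  "'a::topological_space set \<Rightarrow> (real \<Rightarrow> 'a) \<Rightarrow> (real \<Rightarrow> 'a) \<Rightarrow> real set \<Rightarrow> bool" where
  "homotopy_cut_set S \<alpha> \<beta> A \<longleftrightarrow>
     A \<subseteq> {0..1} \<and> closed A \<and> interior (closure A) = {} \<and> {0,1} \<subseteq> A \<and>
     (\<forall>t\<in>A. \<alpha> t = \<beta> t) \<and>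
     (\<forall>a b. a < b \<and> {a<..<b} \<in> components ({0..1} - A) \<longrightarrow>
        homotopic_paths S (\<lambda>t. \<alpha> ((b - a) * t + a)) (\<lambda>t. \<beta> ((b - a) * t + a)))"

definition isolated_point_of :: "real \<Rightarrow> real set \<Rightarrow> bool" where
  "isolated_point_of t B \<longleftrightarrow> t \<in> B \<and> \<not> (t islimpt B)"

end

theory Submission
  imports Defs
begin

text \<open>If \<open>0\<close> is a limit point of \<open>A\<close>, pick \<open>t\<^sub>n \<rightarrow> 0\<close> in \<open>A\<close>. The loops
  \<open>\<alpha>|[0,t\<^sub>n] \<cdot> (\<beta>|[0,t\<^sub>n])\<^sup>-\<^sup>1\<close> form a null-sequence at \<open>x\<^sub>0\<close>, so if \<open>x\<^sub>0 \<notin> aw X\<close> one of them is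
  trivial, i.e. \<open>\<alpha>|[0,t\<^sub>n] \<simeq> \<beta>|[0,t\<^sub>n]\<close>. Deleting \<open>(0,t\<^sub>n)\<close> from \<open>A\<close> isolates \<open>0\<close> and leaves a
  homotopy cut-set, since the only new complementary component is \<open>(0,t\<^sub>n)\<close> itself. The endpoint
  \<open>1\<close> is symmetric, and isolating \<open>1\<close> afterwards only shrinks the set, so \<open>0\<close> stays isolated.\<close>

lemma pathstart_const [simp]: "pathstart (\<lambda>t. c) = c"
  by (simp add: pathstart_def)

lemma pathfinish_const [simp]: "pathfinish (\<lambda>t. c) = c"
  by (simp add: pathfinish_def)

text \<open>The library's groupoid laws for paths are stated with \<open>linepath\<close>, hence only in normed
  spaces. Each law for a path \<open>p\<close> is the image under \<open>p\<close> of the same law for the identity path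
  of \<open>[0,1]\<close>.\<close>

lemma homotopic_paths_compose_path:
  assumes "path p" "path_image p \<subseteq> S" "homotopic_paths {0..1} q r"
  shows "homotopic_paths S (p \<circ> q) (p \<circ> r)"
  using assms by (intro homotopic_paths_continuous_image) (auto simp: path_def path_image_def)

lemma path_id_real [simp]: "path (\<lambda>t::real. t)" "path_image (\<lambda>t::real. t) = {0..1}"
  by (auto simp: path_def path_image_def)

lemma homotopic_paths_rid_const:
  assumes "path p" "path_image p \<subseteq> S"
  shows "homotopic_paths S (p +++ (\<lambda>t. pathfinish p)) p"
proof -
  have "homotopic_paths {0..1} ((\<lambda>t. t) +++ linepath 1 1) (\<lambda>t::real. t)"
    using homotopic_paths_rid[of "\<lambda>t::real. t" "{0..1}"] by (simp add: pathfinish_def)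
  from homotopic_paths_compose_path[OF assms this] show ?thesis
    by (simp add: comp_def joinpaths_def if_distrib linepath_refl pathfinish_def)
qed

lemma homotopic_paths_lid_const:
  assumes "path p" "path_image p \<subseteq> S"
  shows "homotopic_paths S ((\<lambda>t. pathstart p) +++ p) p"
proof -
  have "homotopic_paths {0..1} (linepath 0 0 +++ (\<lambda>t. t)) (\<lambda>t::real. t)"
    using homotopic_paths_lid[of "\<lambda>t::real. t" "{0..1}"] by (simp add: pathstart_def)
  from homotopic_paths_compose_path[OF assms this] show ?thesis
    by (simp add: comp_def joinpaths_def if_distrib linepath_refl pathstart_def)
qed

lemma homotopic_paths_linv_const:
  assumes "path p" "path_image p \<subseteq> S"
  shows "homotopic_paths S (reversepath p +++ p) (\<lambda>t. pathfinish p)"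
proof -
  have "homotopic_paths {0..1} (reversepath (\<lambda>t. t) +++ (\<lambda>t. t)) (linepath 1 (1::real))"
    using homotopic_paths_linv[of "\<lambda>t::real. t" "{0..1}"] by (simp add: pathfinish_def)
  from homotopic_paths_compose_path[OF assms this] show ?thesis
    by (simp add: comp_def joinpaths_def if_distrib reversepath_def linepath_refl pathfinish_def)
qed

lemma homotopic_paths_loop_parts_const:
  assumes p: "path p" "path_image p \<subseteq> S" and q: "path q" "path_image q \<subseteq> S"
    and ends: "pathfinish p = pathfinish q"
    and loop: "homotopic_paths S (p +++ reversepath q) (\<lambda>t. pathstart p)"
  shows "homotopic_paths S p q"
proof -
  have starts: "pathstart q = pathstart p"
    using homotopic_paths_imp_pathfinish[OF loop] by simp
  have "homotopic_paths S p (p +++ (\<lambda>t. pathfinish p))"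
    using homotopic_paths_rid_const[OF p] by (rule homotopic_paths_sym)
  also have "homotopic_paths S \<dots> (p +++ (reversepath q +++ q))"
    using homotopic_paths_sym[OF homotopic_paths_linv_const[OF q]] p ends
    by (intro homotopic_paths_join) auto
  also have "homotopic_paths S \<dots> ((p +++ reversepath q) +++ q)"
    using p q ends by (intro homotopic_paths_assoc) auto
  also have "homotopic_paths S \<dots> ((\<lambda>t. pathstart q) +++ q)"
    using loop q starts by (intro homotopic_paths_join) auto
  also have "homotopic_paths S \<dots> q"
    using homotopic_paths_lid_const[OF q] .
  finally show ?thesis .
qed

text \<open>The library's \<open>subpath\<close> is restricted to normed vector spaces.\<close>

definition tsubpath :: "real \<Rightarrow> real \<Rightarrow> (real \<Rightarrow> 'a) \<Rightarrow> real \<Rightarrow> 'a" where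
  "tsubpath u v g = (\<lambda>x. g ((v - u) * x + u))"

lemma pathstart_tsubpath [simp]: "pathstart (tsubpath u v g) = g u"
  by (simp add: pathstart_def tsubpath_def)

lemma pathfinish_tsubpath [simp]: "pathfinish (tsubpath u v g) = g v"
  by (simp add: pathfinish_def tsubpath_def)

lemma reversepath_tsubpath: "reversepath (tsubpath u v g) = tsubpath v u g"
  by (simp add: reversepath_def tsubpath_def algebra_simps)

lemma path_image_tsubpath: "path_image (tsubpath u v g) = g ` closed_segment u v"
  unfolding closed_segment_real_eq path_image_def tsubpath_def by auto

lemma path_tsubpath:
  assumes "path g" "u \<in> {0..1}" "v \<in> {0..1}"
  shows "path (tsubpath u v g)"
proof -
  have "(\<lambda>x. (v - u) * x + u) ` {0..1} \<subseteq> {0..1}"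
    using closed_segment_subset[OF assms(2,3)] closed_segment_real_eq[of u v] by auto
  then show ?thesis
    unfolding path_def tsubpath_def
    by (intro continuous_on_compose2[OF assms(1)[unfolded path_def]] continuous_intros)
qed

lemma path_image_tsubpath_subset:
  assumes "u \<in> {0..1}" "v \<in> {0..1}"
  shows "path_image (tsubpath u v g) \<subseteq> path_image g"
proof -
  have "closed_segment u v \<subseteq> {0..1}"
    using assms by (intro closed_segment_subset) auto
  then show ?thesis
    unfolding path_image_tsubpath by (auto simp: path_image_def)
qed

lemma null_sequence_reversepath:
  "null_sequence p x \<Longrightarrow> null_sequence (\<lambda>n. reversepath (p n)) x"
  by (simp add: null_sequence_def)

lemma null_sequence_join:
  assumes "null_sequence p x" "null_sequence q x"
  shows "null_sequence (\<lambda>n. p n +++ q n) x"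
  unfolding null_sequence_def
proof (intro allI impI)
  fix U assume "open U \<and> x \<in> U"
  then have "\<forall>\<^sub>F n in sequentially. path_image (p n) \<subseteq> U \<and> path_image (q n) \<subseteq> U"
    using assms by (auto simp: null_sequence_def intro: eventually_conj)
  then show "\<forall>\<^sub>F n in sequentially. path_image (p n +++ q n) \<subseteq> U"
    by eventually_elim (use path_image_join_subset in blast)
qed

lemma null_sequence_tsubpath:
  assumes g: "path g" and c: "c \<in> {0..1}" and f: "\<And>n. f n \<in> {0..1}" "f \<longlonglongrightarrow> c"
  shows "null_sequence (\<lambda>n. tsubpath c (f n) g) (g c)"
  unfolding null_sequence_def
proof (intro allI impI)
  fix U assume U: "open U \<and> g c \<in> U"
  obtain V where V: "open V" "c \<in> V" "\<And>y. y \<in> {0..1} \<Longrightarrow> y \<in> V \<Longrightarrow> g y \<in> U"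
    using g c U unfolding path_def continuous_on_topological by metis
  obtain e where e: "e > 0" "ball c e \<subseteq> V"
    using V(1,2) open_contains_ball by blast
  have "\<forall>\<^sub>F n in sequentially. dist (f n) c < e"
    using f(2) e(1) by (rule tendstoD)
  then show "\<forall>\<^sub>F n in sequentially. path_image (tsubpath c (f n) g) \<subseteq> U"
  proof eventually_elim
    case (elim n)
    have "closed_segment c (f n) \<subseteq> {0..1} \<inter> ball c e"
      using c f(1)[of n] e(1) elim
      by (intro closed_segment_subset convex_Int) (auto simp: dist_commute)
    then have "closed_segment c (f n) \<subseteq> {0..1} \<inter> V"
      using e(2) by blast
    then show ?case
      using V(3) by (fastforce simp: path_image_tsubpath)
  qed
qed

lemma not_aw_imp_trivial_loop:
  assumes "x \<notin> aw S" "null_sequence \<gamma> x"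
    and "\<And>n. path (\<gamma> n)" "\<And>n. path_image (\<gamma> n) \<subseteq> S"
    and "\<And>n. pathstart (\<gamma> n) = x" "\<And>n. pathfinish (\<gamma> n) = x"
  shows "\<exists>n. trivial_loop S (\<gamma> n)"
proof -
  have "x \<in> S"
    using assms(4,5)[of 0] pathstart_in_path_image[of "\<gamma> 0"] by auto
  then show ?thesis
    using assms unfolding aw_def by blast
qed

text \<open>The loops following \<open>\<alpha>\<close> out from \<open>c\<close> and \<open>\<beta>\<close> back form a null-sequence at \<open>\<alpha> c\<close>, so
  one of them is trivial.\<close>

lemma homotopic_tsubpaths_along_sequence:
  assumes \<alpha>: "path \<alpha>" "path_image \<alpha> \<subseteq> S" and \<beta>: "path \<beta>" "path_image \<beta> \<subseteq> S"
    and c: "c \<in> {0..1}" "\<alpha> c = \<beta> c"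
    and f: "\<And>n. f n \<in> {0..1}" "\<And>n. \<alpha> (f n) = \<beta> (f n)" "f \<longlonglongrightarrow> c"
    and naw: "\<alpha> c \<notin> aw S"
  shows "\<exists>n. homotopic_paths S (tsubpath c (f n) \<alpha>) (tsubpath c (f n) \<beta>)"
proof -
  define \<gamma> where "\<gamma> n = tsubpath c (f n) \<alpha> +++ reversepath (tsubpath c (f n) \<beta>)" for n
  have paths: "path (tsubpath c (f n) \<alpha>)" "path (tsubpath c (f n) \<beta>)" for n
    using path_tsubpath \<alpha>(1) \<beta>(1) c(1) f(1) by blast+
  have images: "path_image (tsubpath c (f n) \<alpha>) \<subseteq> S" "path_image (tsubpath c (f n) \<beta>) \<subseteq> S" for n
    using path_image_tsubpath_subset[OF c(1) f(1)] \<alpha>(2) \<beta>(2) by blast+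
  have "null_sequence \<gamma> (\<alpha> c)"
    unfolding \<gamma>_def using null_sequence_tsubpath[OF \<beta>(1) c(1) f(1,3)] c(2)
    by (intro null_sequence_join null_sequence_reversepath null_sequence_tsubpath \<alpha>(1) c(1) f) simp
  moreover have "path (\<gamma> n)" for n
    unfolding \<gamma>_def using paths f(2) by (auto intro!: path_join_imp)
  moreover have "path_image (\<gamma> n) \<subseteq> S" for n
    unfolding \<gamma>_def using images by (intro subset_path_image_join) auto
  moreover have "pathstart (\<gamma> n) = \<alpha> c" "pathfinish (\<gamma> n) = \<alpha> c" for n
    unfolding \<gamma>_def using c(2) by simp_all
  ultimately obtain n where "trivial_loop S (\<gamma> n)"
    using not_aw_imp_trivial_loop[OF naw] by metis
  then have "homotopic_paths S (tsubpath c (f n) \<alpha> +++ reversepath (tsubpath c (f n) \<beta>))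
      (\<lambda>t. pathstart (tsubpath c (f n) \<alpha>))"
    unfolding trivial_loop_def \<gamma>_def by simp
  then show ?thesis
    using homotopic_paths_loop_parts_const paths images f(2) by (metis pathfinish_tsubpath)
qed

lemma components_Diff_interval_cases:
  fixes A I :: "real set"
  assumes ab: "a < b" "a \<in> A" "b \<in> A" and sub: "{a<..<b} \<subseteq> I"
    and cd: "c < d" "{c<..<d} \<in> components (I - (A - {a<..<b}))"
  shows "(c = a \<and> d = b) \<or> {c<..<d} \<in> components (I - A)"
proof (cases "{c<..<d} \<inter> {a<..<b} = {}")
  case False
  have "{a<..<b} \<subseteq> {c<..<d}"
    by (rule components_maximal[OF cd(2)]) (use ab sub False in auto)
  then have "c \<le> a \<and> b \<le> d"
    using ab(1) greaterThanLessThan_subseteq_greaterThanLessThan by blast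
  moreover have "a \<notin> {c<..<d}" "b \<notin> {c<..<d}"
    using in_components_subset[OF cd(2)] ab by auto
  ultimately show ?thesis
    using ab(1) by auto
next
  case True
  then have CA: "{c<..<d} \<subseteq> I - A"
    using in_components_subset[OF cd(2)] by blast
  then obtain C where C: "C \<in> components (I - A)" "{c<..<d} \<subseteq> C"
    using exists_component_superset[OF CA _ connected_Ioo] cd(1) by fastforce
  have "{c<..<d} \<noteq> {}"
    using cd(1) by simp
  with C(2) have "{c<..<d} \<inter> C \<noteq> {}"
    by blast
  moreover have "C \<subseteq> I - (A - {a<..<b})"
    using in_components_subset[OF C(1)] by blast
  ultimately have "C \<subseteq> {c<..<d}"
    using components_maximal[OF cd(2) in_components_connected[OF C(1)]] by blast
  then show ?thesis
    using C by auto
qed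

lemma homotopy_cut_set_Diff_interval:
  assumes H: "homotopy_cut_set S \<alpha> \<beta> A" and ab: "a < b" "a \<in> A" "b \<in> A"
    and hab: "homotopic_paths S (tsubpath a b \<alpha>) (tsubpath a b \<beta>)"
  shows "homotopy_cut_set S \<alpha> \<beta> (A - {a<..<b})"
proof -
  have A01: "A \<subseteq> {0..1}" and clA: "closed A" and nd: "interior (closure A) = {}"
    and A0: "{0,1} \<subseteq> A" and eq: "\<forall>t\<in>A. \<alpha> t = \<beta> t"
    and gaps: "\<And>c d. c < d \<Longrightarrow> {c<..<d} \<in> components ({0..1} - A) \<Longrightarrow>
        homotopic_paths S (\<lambda>t. \<alpha> ((d - c) * t + c)) (\<lambda>t. \<beta> ((d - c) * t + c))"
    using H unfolding homotopy_cut_set_def by auto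
  have ab01: "0 \<le> a" "b \<le> 1"
    using ab(2,3) A01 by auto
  then have "{a<..<b} \<subseteq> {0..1}"
    by auto
  then have gaps': "homotopic_paths S (\<lambda>t. \<alpha> ((d - c) * t + c)) (\<lambda>t. \<beta> ((d - c) * t + c))"
    if "c < d" "{c<..<d} \<in> components ({0..1} - (A - {a<..<b}))" for c d
    using components_Diff_interval_cases[OF ab _ that] gaps[OF that(1)] hab
    by (auto simp: tsubpath_def)
  have closed: "closed (A - {a<..<b})"
    using clA by (intro closed_Diff) auto
  then have "interior (closure (A - {a<..<b})) \<subseteq> interior (closure A)"
    using clA by (simp add: interior_mono)
  with nd have "interior (closure (A - {a<..<b})) = {}"
    by blast
  moreover have "A - {a<..<b} \<subseteq> {0..1}" "{0,1} \<subseteq> A - {a<..<b}" "\<forall>t\<in>A - {a<..<b}. \<alpha> t = \<beta> t"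
    using A01 A0 eq ab01 by auto
  ultimately show ?thesis
    unfolding homotopy_cut_set_def using closed gaps' by blast
qed

lemma isolated_point_ofI:
  assumes "c \<in> B" "e > 0" "\<And>x. x \<in> B \<Longrightarrow> dist x c < e \<Longrightarrow> x = c"
  shows "isolated_point_of c B"
  using assms unfolding isolated_point_of_def islimpt_approachable by force

lemma isolated_point_of_subset:
  "isolated_point_of c B \<Longrightarrow> C \<subseteq> B \<Longrightarrow> c \<in> C \<Longrightarrow> isolated_point_of c C"
  unfolding isolated_point_of_def using islimpt_subset by blast

lemma homotopic_tsubpaths_at_limit_point:
  assumes \<alpha>: "path \<alpha>" "path_image \<alpha> \<subseteq> S" and \<beta>: "path \<beta>" "path_image \<beta> \<subseteq> S"
    and H: "homotopy_cut_set S \<alpha> \<beta> A" and c: "c \<in> A" "c islimpt A" and naw: "\<alpha> c \<notin> aw S"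
  shows "\<exists>t\<in>A. t \<noteq> c \<and> homotopic_paths S (tsubpath c t \<alpha>) (tsubpath c t \<beta>)"
proof -
  have A01: "A \<subseteq> {0..1}" and eq: "\<forall>t\<in>A. \<alpha> t = \<beta> t"
    using H unfolding homotopy_cut_set_def by auto
  obtain f where f: "\<And>n. f n \<in> A - {c}" "f \<longlonglongrightarrow> c"
    using c(2) islimpt_sequential by blast
  have "f n \<in> {0..1}" "\<alpha> (f n) = \<beta> (f n)" for n
    using f(1)[of n] A01 eq by auto
  moreover have "c \<in> {0..1}" "\<alpha> c = \<beta> c"
    using c(1) A01 eq by auto
  ultimately obtain n where "homotopic_paths S (tsubpath c (f n) \<alpha>) (tsubpath c (f n) \<beta>)"
    using homotopic_tsubpaths_along_sequence[OF \<alpha> \<beta> _ _ _ _ f(2) naw] by blast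
  then show ?thesis
    using f(1) by blast
qed

lemma homotopy_cut_set_isolate_0:
  assumes \<alpha>: "path \<alpha>" "path_image \<alpha> \<subseteq> S" and \<beta>: "path \<beta>" "path_image \<beta> \<subseteq> S"
    and H: "homotopy_cut_set S \<alpha> \<beta> A" and naw: "\<alpha> 0 \<notin> aw S"
  shows "\<exists>B\<subseteq>A. homotopy_cut_set S \<alpha> \<beta> B \<and> isolated_point_of 0 B"
proof -
  have A01: "A \<subseteq> {0..1}" and A0: "0 \<in> A"
    using H unfolding homotopy_cut_set_def by auto
  show ?thesis
  proof (cases "0 islimpt A")
    case False
    with H A0 show ?thesis
      unfolding isolated_point_of_def by blast
  next
    case True
    then obtain t where t: "t \<in> A" "t \<noteq> 0" "homotopic_paths S (tsubpath 0 t \<alpha>) (tsubpath 0 t \<beta>)"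
      using homotopic_tsubpaths_at_limit_point[OF \<alpha> \<beta> H A0 _ naw] by blast
    then have t0: "0 < t"
      using A01 by force
    have "homotopy_cut_set S \<alpha> \<beta> (A - {0<..<t})"
      using homotopy_cut_set_Diff_interval[OF H t0 A0 t(1,3)] .
    moreover have "isolated_point_of 0 (A - {0<..<t})"
      using A0 A01 t0 by (intro isolated_point_ofI[where e = t]) (auto simp: dist_real_def)
    ultimately show ?thesis
      by blast
  qed
qed

lemma homotopy_cut_set_isolate_1:
  assumes \<alpha>: "path \<alpha>" "path_image \<alpha> \<subseteq> S" and \<beta>: "path \<beta>" "path_image \<beta> \<subseteq> S"
    and H: "homotopy_cut_set S \<alpha> \<beta> A" and naw: "\<alpha> 1 \<notin> aw S"
  shows "\<exists>B\<subseteq>A. homotopy_cut_set S \<alpha> \<beta> B \<and> isolated_point_of 1 B"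
proof -
  have A01: "A \<subseteq> {0..1}" and A1: "1 \<in> A"
    using H unfolding homotopy_cut_set_def by auto
  show ?thesis
  proof (cases "1 islimpt A")
    case False
    with H A1 show ?thesis
      unfolding isolated_point_of_def by blast
  next
    case True
    then obtain t where t: "t \<in> A" "t \<noteq> 1" "homotopic_paths S (tsubpath 1 t \<alpha>) (tsubpath 1 t \<beta>)"
      using homotopic_tsubpaths_at_limit_point[OF \<alpha> \<beta> H A1 _ naw] by blast
    then have t1: "t < 1"
      using A01 by force
    have "homotopic_paths S (tsubpath t 1 \<alpha>) (tsubpath t 1 \<beta>)"
      using homotopic_paths_reversepath_D[OF t(3)] by (simp add: reversepath_tsubpath)
    then have "homotopy_cut_set S \<alpha> \<beta> (A - {t<..<1})"
      using homotopy_cut_set_Diff_interval[OF H t1 t(1) A1] by blast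
    moreover have "isolated_point_of 1 (A - {t<..<1})"
      using A1 A01 t1 by (intro isolated_point_ofI[where e = "1 - t"]) (auto simp: dist_real_def)
    ultimately show ?thesis
      by blast
  qed
qed

theorem mainTheorem12:
  fixes S :: "'a::topological_space set" and \<alpha> \<beta> :: "real \<Rightarrow> 'a" and x0 x1 :: 'a
  assumes "path \<alpha>" "path_image \<alpha> \<subseteq> S" "pathstart \<alpha> = x0" "pathfinish \<alpha> = x1"
      and "path \<beta>" "path_image \<beta> \<subseteq> S" "pathstart \<beta> = x0" "pathfinish \<beta> = x1"
      and "homotopy_cut_set S \<alpha> \<beta> A"
  shows "(x0 \<notin> aw S \<longrightarrow> (\<exists>B\<subseteq>A. homotopy_cut_set S \<alpha> \<beta> B \<and> isolated_point_of 0 B))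
       \<and> (x1 \<notin> aw S \<longrightarrow> (\<exists>B\<subseteq>A. homotopy_cut_set S \<alpha> \<beta> B \<and> isolated_point_of 1 B))
       \<and> (x0 \<notin> aw S \<and> x1 \<notin> aw S \<longrightarrow>
            (\<exists>B\<subseteq>A. homotopy_cut_set S \<alpha> \<beta> B \<and> isolated_point_of 0 B \<and> isolated_point_of 1 B))"
proof -
  have x0: "\<alpha> 0 = x0" and x1: "\<alpha> 1 = x1"
    using assms(3,4) by (simp_all add: pathstart_def pathfinish_def)
  have isolate_0: "\<exists>B\<subseteq>C. homotopy_cut_set S \<alpha> \<beta> B \<and> isolated_point_of 0 B"
    if "x0 \<notin> aw S" "homotopy_cut_set S \<alpha> \<beta> C" for C
    using homotopy_cut_set_isolate_0[OF assms(1,2,5,6) that(2)] that(1) x0 by simp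
  have isolate_1: "\<exists>B\<subseteq>C. homotopy_cut_set S \<alpha> \<beta> B \<and> isolated_point_of 1 B"
    if "x1 \<notin> aw S" "homotopy_cut_set S \<alpha> \<beta> C" for C
    using homotopy_cut_set_isolate_1[OF assms(1,2,5,6) that(2)] that(1) x1 by simp
  have "\<exists>B\<subseteq>A. homotopy_cut_set S \<alpha> \<beta> B \<and> isolated_point_of 0 B \<and> isolated_point_of 1 B"
    if n0: "x0 \<notin> aw S" and n1: "x1 \<notin> aw S"
  proof -
    obtain B0 where B0: "B0 \<subseteq> A" "homotopy_cut_set S \<alpha> \<beta> B0" "isolated_point_of 0 B0"
      using isolate_0[OF n0 assms(9)] by blast
    obtain B where B: "B \<subseteq> B0" "homotopy_cut_set S \<alpha> \<beta> B" "isolated_point_of 1 B"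
      using isolate_1[OF n1 B0(2)] by blast
    have "isolated_point_of 0 B"
      using isolated_point_of_subset[OF B0(3) B(1)] B(2) by (simp add: homotopy_cut_set_def)
    moreover have "B \<subseteq> A"
      using B(1) B0(1) by (rule order_trans)
    ultimately show ?thesis
      using B(2,3) by blast
  qed
  then show ?thesis
    using isolate_0[OF _ assms(9)] isolate_1[OF _ assms(9)] by blast
qed

end
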